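(* Let $(X,d)$ be a pointed metric space and let $((x_i,y_i))_{i\in I}$ be a Lipschitz interpolating family in $\widetilde X$ for $\mathrm{Lip}_0(X)$. Then there exists $\delta>0$ (depending on the family) such that every family $((u_i,v_i))_{i\in I}$ in $\widetilde X$ satisfying $\rho((x_i,y_i),(u_i,v_i))<\delta$ for all $i\in I$ is also Lipschitz interpolating for $\mathrm{Lip}_0(X)$.
   Context: All spaces are real. $(X,d)$ is a metric space with base point $0$, $\widetilde{X}=\{(x,y)\in X\times X: x\neq y\}$. $\mathrm{Lip}_0(X)$ is the Banach space of Lipschitz $f:X\to\mathbb{R}$ with $f(0)=0$, normed by $\|f\|=\sup_{(x,y)\in\widetilde X}|f(x)-f(y)|/d(x,y)$. For $x\in X$, $\delta_x\in\mathrm{Lip}_0(X)^*$ is $\delta_x(f)=f(x)$; for $(x,y)\in\widetilde X$, $m_{x,y}=(\delta_x-\delta_y)/d(x,y)\in\mathrm{Lip}_0(X)^*$. The Lipschitz-molecular metric on $\widetilde X$ is $\rho((x,y),(u,v))=\|m_{x,y}-m_{u,v}\|$ (dual norm). For a family $((x_i,y_i))_{i\in I}$ in $\widetilde X$, its Lipschitz interpolating operator is $T:\mathrm{Lip}_0(X)\to\ell_\infty(I)$, $T(f)=\big((f(x_i)-f(y_i))/d(x_i,y_i)\big)_{i\in I}$, and the family is Lipschitz interpolating for $\mathrm{Lip}_0(X)$ if $T$ is surjective. *)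

theory Defs
  imports "HOL-Analysis.Analysis"
begin

text \<open>The pointed metric space is the type 'a (class metric_space) with base point p.\<close>

definition lip0 :: "'a::metric_space \<Rightarrow> ('a \<Rightarrow> real) \<Rightarrow> bool" where
  "lip0 p f \<longleftrightarrow> f p = 0 \<and> (\<exists>L. \<forall>x y. \<bar>f x - f y\<bar> \<le> L * dist x y)"

text \<open>Lipschitz norm (supremum over pairs of distinct points; 0 added so a one-point space gives 0).\<close>
definition lipnorm :: "('a::metric_space \<Rightarrow> real) \<Rightarrow> real" where
  "lipnorm f = Sup (insert 0 {\<bar>f x - f y\<bar> / dist x y | x y. x \<noteq> y})"

definition mol :: "'a::metric_space \<Rightarrow> 'a \<Rightarrow> ('a \<Rightarrow> real) \<Rightarrow> real" where
  "mol x y f = (f x - f y) / dist x y"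

text \<open>Lipschitz-molecular metric: dual norm of m_{x,y} - m_{u,v} on Lip_0(X).\<close>
definition mol_dist :: "'a::metric_space \<Rightarrow> 'a \<times> 'a \<Rightarrow> 'a \<times> 'a \<Rightarrow> real" where
  "mol_dist p xy uv = Sup {\<bar>mol (fst xy) (snd xy) f - mol (fst uv) (snd uv) f\<bar> | f.
      lip0 p f \<and> lipnorm f \<le> 1}"

definition lip_interpolating :: "'a::metric_space \<Rightarrow> ('i \<Rightarrow> 'a) \<Rightarrow> ('i \<Rightarrow> 'a) \<Rightarrow> bool" where
  "lip_interpolating p x y \<longleftrightarrow>
     (\<forall>a :: 'i \<Rightarrow> real. bounded (range a) \<longrightarrow>
        (\<exists>f. lip0 p f \<and> (\<forall>i. mol (x i) (y i) f = a i)))"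

end

theory Submission
  imports Defs
begin

text \<open>The interpolating operator T of the family is a bounded linear surjection
  from Lip_0(X) onto l_inf(I). As in the open mapping theorem, the Baire category
  theorem in l_inf(I) yields r, K > 0 such that every b in the r-ball is within r/4
  of some T f with Lipschitz norm at most K. Since the molecules satisfy
  |m_{x,y}(f) - m_{u,v}(f)| <= rho((x,y),(u,v)) ||f||, the perturbed operator inherits
  this property with error r/2 as soon as all rho < r/(4K). An operator with this
  approximate surjectivity is surjective: correct the residual repeatedly, halving it
  each time, and sum the geometric series of corrections in Lip_0(X).\<close>

lemma lip0I: "f p = 0 \<Longrightarrow> (\<And>x y. \<bar>f x - f y\<bar> \<le> L * dist x y) \<Longrightarrow> lip0 p f"
  unfolding lip0_def by blast

lemma lip0_bdd_above_slopes:
  assumes "lip0 p f"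
  shows "bdd_above (insert 0 {\<bar>f x - f y\<bar> / dist x y | x y. x \<noteq> y})"
proof -
  obtain L where L: "\<And>x y. \<bar>f x - f y\<bar> \<le> L * dist x y"
    using assms unfolding lip0_def by auto
  have "\<bar>f x - f y\<bar> / dist x y \<le> max L 0" if "x \<noteq> y" for x y
  proof -
    have "\<bar>f x - f y\<bar> \<le> max L 0 * dist x y"
      using L[of x y] mult_right_mono[of L "max L 0" "dist x y"] by simp
    then show ?thesis using that by (simp add: divide_le_eq)
  qed
  then show ?thesis unfolding bdd_above_def by (intro exI[of _ "max L 0"]) auto
qed

lemma lipnorm_nonneg: "lip0 p f \<Longrightarrow> 0 \<le> lipnorm f"
  unfolding lipnorm_def by (rule cSup_upper[OF _ lip0_bdd_above_slopes]) auto

lemma lip0_lipnorm_bound: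
  assumes "lip0 p f"
  shows "\<bar>f x - f y\<bar> \<le> lipnorm f * dist x y"
proof (cases "x = y")
  case False
  have "\<bar>f x - f y\<bar> / dist x y \<le> lipnorm f"
    unfolding lipnorm_def using False by (intro cSup_upper[OF _ lip0_bdd_above_slopes[OF assms]]) auto
  then show ?thesis using False by (simp add: divide_le_eq)
qed simp

lemma lipnorm_le:
  assumes "\<And>x y. \<bar>f x - f y\<bar> \<le> L * dist x y" and "0 \<le> L"
  shows "lipnorm f \<le> L"
  unfolding lipnorm_def using assms by (intro cSup_least) (auto simp: divide_le_eq)

lemma lip0_cmult:
  assumes "lip0 p f"
  shows "lip0 p (\<lambda>z. c * f z)" and "lipnorm (\<lambda>z. c * f z) \<le> \<bar>c\<bar> * lipnorm f"
proof -
  have bound: "\<bar>c * f x - c * f y\<bar> \<le> (\<bar>c\<bar> * lipnorm f) * dist x y" for x y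
  proof -
    have "\<bar>c * f x - c * f y\<bar> = \<bar>c\<bar> * \<bar>f x - f y\<bar>"
      by (simp add: abs_mult[symmetric] right_diff_distrib)
    also have "\<dots> \<le> \<bar>c\<bar> * (lipnorm f * dist x y)"
      by (rule mult_left_mono[OF lip0_lipnorm_bound[OF assms]]) simp
    finally show ?thesis by simp
  qed
  show "lip0 p (\<lambda>z. c * f z)"
    using assms by (intro lip0I[OF _ bound]) (simp add: lip0_def)
  show "lipnorm (\<lambda>z. c * f z) \<le> \<bar>c\<bar> * lipnorm f"
    using lipnorm_nonneg[OF assms] by (intro lipnorm_le[OF bound]) simp
qed

lemma lip0_diff:
  assumes "lip0 p f" "lip0 p g"
  shows "lip0 p (\<lambda>z. f z - g z)" and "lipnorm (\<lambda>z. f z - g z) \<le> lipnorm f + lipnorm g"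
proof -
  have bound: "\<bar>(f x - g x) - (f y - g y)\<bar> \<le> (lipnorm f + lipnorm g) * dist x y" for x y
    using lip0_lipnorm_bound[OF assms(1), of x y] lip0_lipnorm_bound[OF assms(2), of x y]
    by (simp add: distrib_right)
  show "lip0 p (\<lambda>z. f z - g z)"
    using assms by (intro lip0I[OF _ bound]) (simp add: lip0_def)
  show "lipnorm (\<lambda>z. f z - g z) \<le> lipnorm f + lipnorm g"
    using lipnorm_nonneg[OF assms(1)] lipnorm_nonneg[OF assms(2)] by (intro lipnorm_le[OF bound]) simp
qed

lemma mol_diff: "mol a b (\<lambda>z. f z - g z) = mol a b f - mol a b g"
  unfolding mol_def by (simp add: diff_divide_distrib[symmetric] algebra_simps)

lemma mol_cmult: "mol a b (\<lambda>z. c * f z) = c * mol a b f"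
  unfolding mol_def by (simp add: right_diff_distrib[symmetric])

lemma abs_mol_le_lipnorm: "lip0 p f \<Longrightarrow> \<bar>mol x y f\<bar> \<le> lipnorm f"
  unfolding mol_def using lip0_lipnorm_bound[of p f x y]
  by (cases "x = y") (auto simp: divide_le_eq lipnorm_nonneg)

lemma abs_mol_diff_le_mol_dist:
  assumes f: "lip0 p f"
  shows "\<bar>mol x y f - mol u v f\<bar> \<le> mol_dist p (x, y) (u, v) * lipnorm f"
proof (cases "lipnorm f = 0")
  case True
  then show ?thesis
    using abs_mol_le_lipnorm[OF f, of x y] abs_mol_le_lipnorm[OF f, of u v] by simp
next
  case False
  then have pos: "lipnorm f > 0" using lipnorm_nonneg[OF f] by simp
  define h where "h z = f z / lipnorm f" for z
  have h: "lip0 p h" "lipnorm h \<le> 1"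
    using lip0_cmult[OF f, of "1 / lipnorm f"] pos unfolding h_def by auto
  have mol_h: "mol a b h = mol a b f / lipnorm f" for a b
    unfolding mol_def h_def by (simp add: diff_divide_distrib[symmetric])
  have "\<bar>mol x y h - mol u v h\<bar> \<le> mol_dist p (x, y) (u, v)"
    unfolding mol_dist_def
  proof (rule cSup_upper)
    show "bdd_above {\<bar>mol (fst (x, y)) (snd (x, y)) g - mol (fst (u, v)) (snd (u, v)) g\<bar> |g.
        lip0 p g \<and> lipnorm g \<le> 1}"
      using abs_mol_le_lipnorm[of p _ x y] abs_mol_le_lipnorm[of p _ u v]
      by (intro bdd_aboveI[of _ 2]) fastforce
  qed (use h in auto)
  then show ?thesis
    using pos unfolding mol_h by (simp add: diff_divide_distrib[symmetric] divide_le_eq)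
qed

lemma lip0_suminf:
  assumes f: "\<And>k. lip0 p (f k)" and norm: "\<And>k. lipnorm (f k) \<le> c k" and "summable c"
  shows "lip0 p (\<lambda>z. \<Sum>k. f k z)" and "(\<lambda>k. mol a b (f k)) sums mol a b (\<lambda>z. \<Sum>k. f k z)"
proof -
  have incr: "\<bar>f k z - f k w\<bar> \<le> c k * dist z w" for k z w
    using lip0_lipnorm_bound[OF f, of k z w] mult_right_mono[OF norm, of "dist z w" k] by simp
  have abs_summable: "summable (\<lambda>k. \<bar>f k z - f k w\<bar>)" for z w
    using incr by (intro summable_rabs_comparison_test[OF _ summable_mult2[OF \<open>summable c\<close>]]) auto
  then have summable: "summable (\<lambda>k. f k z - f k w)" for z w
    by (rule summable_rabs_cancel)
  have "f k p = 0" for k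
    using f[of k] by (simp add: lip0_def)
  then have "summable (\<lambda>k. f k z)" for z
    using summable[of z p] by simp
  then have suminf_diff: "(\<Sum>k. f k z) - (\<Sum>k. f k w) = (\<Sum>k. f k z - f k w)" for z w
    by (intro suminf_diff)
  have "\<bar>(\<Sum>k. f k z) - (\<Sum>k. f k w)\<bar> \<le> suminf c * dist z w" for z w
  proof -
    have "\<bar>(\<Sum>k. f k z) - (\<Sum>k. f k w)\<bar> \<le> (\<Sum>k. \<bar>f k z - f k w\<bar>)"
      unfolding suminf_diff by (rule summable_rabs[OF abs_summable])
    also have "\<dots> \<le> (\<Sum>k. c k * dist z w)"
      by (rule suminf_le[OF incr abs_summable summable_mult2[OF \<open>summable c\<close>]])
    also have "\<dots> = suminf c * dist z w"
      by (rule suminf_mult2[OF \<open>summable c\<close>, symmetric])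
    finally show ?thesis .
  qed
  then show "lip0 p (\<lambda>z. \<Sum>k. f k z)"
    by (rule lip0I[rotated]) (simp add: \<open>\<And>k. f k p = 0\<close>)
  have "(\<lambda>k. f k a - f k b) sums ((\<Sum>k. f k a) - (\<Sum>k. f k b))"
    unfolding suminf_diff by (rule summable_sums[OF summable])
  then show "(\<lambda>k. mol a b (f k)) sums mol a b (\<lambda>z. \<Sum>k. f k z)"
    unfolding mol_def by (rule sums_divide)
qed


lemma (in Metric_space) mcomplete_ball_in_closure_of_cover:
  fixes A :: "nat \<Rightarrow> 'a set"
  assumes "mcomplete" and "M \<noteq> {}" and cover: "(\<Union>n. A n) = M"
  obtains n x r where "x \<in> M" "r > 0" "mball x r \<subseteq> mtopology closure_of A n"
proof -
  define \<G> where "\<G> = range (\<lambda>n. mtopology closure_of A n)"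
  have "A n \<subseteq> mtopology closure_of A n" for n
    using cover by (intro closure_of_subset) (auto simp: topspace_mtopology)
  then have "M \<subseteq> \<Union>\<G>"
    unfolding \<G>_def using cover by blast
  then have "\<Union>\<G> = M"
    unfolding \<G>_def using closure_of_subset_topspace[of mtopology] topspace_mtopology by blast
  then have "mtopology interior_of \<Union>\<G> \<noteq> {}"
    using \<open>M \<noteq> {}\<close> interior_of_topspace[of mtopology] by (simp add: topspace_mtopology)
  moreover have "countable \<G>" "\<And>T. T \<in> \<G> \<Longrightarrow> closedin mtopology T"
    unfolding \<G>_def by auto
  ultimately obtain T where "T \<in> \<G>" "mtopology interior_of T \<noteq> {}"
    using metric_Baire_category_alt[OF \<open>mcomplete\<close>, of \<G>] by blast
  then show thesis
    using that unfolding \<G>_def metric_interior_of by blast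
qed

lemma bounded_funs_Baire:
  fixes A :: "nat \<Rightarrow> ('i \<Rightarrow> real) set"
  assumes cover: "(\<Union>n. A n) = {b. bounded (range b)}"
  obtains r b0 n where "r > 0"
    and "\<And>b e. \<forall>i. \<bar>b i - b0 i\<bar> \<le> r \<Longrightarrow> e > 0 \<Longrightarrow> \<exists>c\<in>A n. \<forall>i. \<bar>b i - c i\<bar> \<le> e"
proof -
  interpret F: Metric_space "Met_TC.fspace (UNIV :: 'i set)" "Met_TC.fdist (UNIV :: 'i set) :: ('i \<Rightarrow> real) \<Rightarrow> _"
    by (rule Met_TC.Metric_space_funspace)
  let ?L = "Met_TC.fspace (UNIV :: 'i set) :: ('i \<Rightarrow> real) set"
  have fspace: "?L = {b. bounded (range b)}"
    by (auto simp: Met_TC.fspace_def)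
  have fdist_le: "Met_TC.fdist UNIV b c \<le> a \<longleftrightarrow> (\<forall>i. \<bar>b i - c i\<bar> \<le> a)"
    if "bounded (range b)" "bounded (range (c :: 'i \<Rightarrow> real))" for b c a
    using Met_TC.funspace_mdist_le[of b UNIV c a] that fspace by (simp add: dist_real_def)
  have "F.mcomplete"
    using Met_TC.mcomplete_funspace[of "UNIV :: 'i set"] complete_UNIV by (simp add: mcomplete_of_def)
  moreover have "(\<lambda>i. 0) \<in> ?L"
    using fspace by simp
  then have "?L \<noteq> {}"
    by blast
  moreover have "(\<Union>n. A n) = ?L"
    unfolding fspace by (rule cover)
  ultimately obtain n b0 r where b0: "b0 \<in> ?L" and "r > 0"
    and ball: "F.mball b0 r \<subseteq> F.mtopology closure_of A n"
    by (rule F.mcomplete_ball_in_closure_of_cover)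
  then obtain B where B: "\<And>i. \<bar>b0 i\<bar> \<le> B"
    using fspace unfolding bounded_iff by auto
  show thesis
  proof (rule that[of "r / 2" b0 n])
    fix b and e :: real
    assume near: "\<forall>i. \<bar>b i - b0 i\<bar> \<le> r / 2" and "e > 0"
    have "\<bar>b i\<bar> \<le> B + r / 2" for i
      using abs_triangle_ineq[of "b i - b0 i" "b0 i"] near[rule_format, of i] B[of i] by simp
    then have b: "b \<in> ?L"
      unfolding fspace bounded_iff by auto
    moreover have "Met_TC.fdist UNIV b0 b \<le> r / 2"
      using fdist_le[of b0 b "r / 2"] near b0 b unfolding fspace
      by (simp add: abs_minus_commute)
    ultimately have "b \<in> F.mball b0 r"
      using b0 \<open>r > 0\<close> by simp
    then have "b \<in> F.mtopology closure_of A n"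
      using ball by blast
    then obtain c where "c \<in> A n" "c \<in> F.mball b e"
      using \<open>e > 0\<close> unfolding F.metric_closure_of by blast
    moreover have "Met_TC.fdist UNIV b c \<le> e" "c \<in> ?L"
      using \<open>c \<in> F.mball b e\<close> by auto
    ultimately show "\<exists>c\<in>A n. \<forall>i. \<bar>b i - c i\<bar> \<le> e"
      using fdist_le[of b c e] b unfolding fspace by auto
  qed (use \<open>r > 0\<close> in simp)
qed


definition interp_approx :: "'a::metric_space \<Rightarrow> ('i \<Rightarrow> 'a) \<Rightarrow> ('i \<Rightarrow> 'a) \<Rightarrow> real \<Rightarrow> real \<Rightarrow> real \<Rightarrow> bool" where
  "interp_approx p x y r K \<epsilon> \<longleftrightarrow>
     (\<forall>b. (\<forall>i. \<bar>b i\<bar> \<le> r) \<longrightarrow>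
        (\<exists>f. lip0 p f \<and> lipnorm f \<le> K \<and> (\<forall>i. \<bar>mol (x i) (y i) f - b i\<bar> \<le> \<epsilon>)))"

lemma interp_approxE:
  assumes "interp_approx p x y r K \<epsilon>" and "\<forall>i. \<bar>b i\<bar> \<le> r"
  obtains f where "lip0 p f" "lipnorm f \<le> K" "\<And>i. \<bar>mol (x i) (y i) f - b i\<bar> \<le> \<epsilon>"
  using assms unfolding interp_approx_def by blast

lemma interp_approx_scale:
  fixes x y :: "'i \<Rightarrow> 'a::metric_space"
  assumes approx: "interp_approx p x y r K \<epsilon>" and "c > 0"
  shows "interp_approx p x y (c * r) (c * K) (c * \<epsilon>)"
  unfolding interp_approx_def
proof (intro allI impI)
  fix b :: "'i \<Rightarrow> real"
  assume "\<forall>i. \<bar>b i\<bar> \<le> c * r"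
  then have "\<forall>i. \<bar>b i / c\<bar> \<le> r"
    using \<open>c > 0\<close> by (simp add: divide_le_eq mult.commute)
  then obtain f where f: "lip0 p f" "lipnorm f \<le> K" and err: "\<And>i. \<bar>mol (x i) (y i) f - b i / c\<bar> \<le> \<epsilon>"
    by (rule interp_approxE[OF approx]) blast
  have "lipnorm (\<lambda>z. c * f z) \<le> c * lipnorm f"
    using lip0_cmult(2)[OF f(1), of c] \<open>c > 0\<close> by simp
  also have "\<dots> \<le> c * K"
    using f(2) \<open>c > 0\<close> by simp
  finally have "lipnorm (\<lambda>z. c * f z) \<le> c * K" .
  moreover have "\<bar>mol (x i) (y i) (\<lambda>z. c * f z) - b i\<bar> \<le> c * \<epsilon>" for i
  proof -
    have "mol (x i) (y i) (\<lambda>z. c * f z) - b i = c * (mol (x i) (y i) f - b i / c)"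
      using \<open>c > 0\<close> by (simp add: mol_cmult right_diff_distrib)
    then have "\<bar>mol (x i) (y i) (\<lambda>z. c * f z) - b i\<bar> = c * \<bar>mol (x i) (y i) f - b i / c\<bar>"
      using \<open>c > 0\<close> by (simp add: abs_mult)
    also have "\<dots> \<le> c * \<epsilon>"
      using err[of i] \<open>c > 0\<close> by simp
    finally show ?thesis .
  qed
  ultimately show "\<exists>f. lip0 p f \<and> lipnorm f \<le> c * K \<and> (\<forall>i. \<bar>mol (x i) (y i) f - b i\<bar> \<le> c * \<epsilon>)"
    using lip0_cmult(1)[OF f(1)] by blast
qed

lemma interp_approx_perturb:
  fixes x y u v :: "'i \<Rightarrow> 'a::metric_space"
  assumes approx: "interp_approx p x y r K \<epsilon>" and "0 \<le> \<delta>"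
    and close: "\<forall>i. mol_dist p (x i, y i) (u i, v i) \<le> \<delta>"
  shows "interp_approx p u v r K (\<epsilon> + \<delta> * K)"
  unfolding interp_approx_def
proof (intro allI impI)
  fix b :: "'i \<Rightarrow> real"
  assume "\<forall>i. \<bar>b i\<bar> \<le> r"
  then obtain f where f: "lip0 p f" "lipnorm f \<le> K" and err: "\<And>i. \<bar>mol (x i) (y i) f - b i\<bar> \<le> \<epsilon>"
    by (rule interp_approxE[OF approx]) blast
  have "\<bar>mol (u i) (v i) f - b i\<bar> \<le> \<epsilon> + \<delta> * K" for i
  proof -
    have "\<bar>mol (x i) (y i) f - mol (u i) (v i) f\<bar> \<le> mol_dist p (x i, y i) (u i, v i) * lipnorm f"
      by (rule abs_mol_diff_le_mol_dist[OF f(1)])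
    also have "\<dots> \<le> \<delta> * K"
      using close lipnorm_nonneg[OF f(1)] f(2) \<open>0 \<le> \<delta>\<close> by (intro mult_mono) auto
    finally show ?thesis
      using err[of i] by linarith
  qed
  then show "\<exists>f. lip0 p f \<and> lipnorm f \<le> K \<and> (\<forall>i. \<bar>mol (u i) (v i) f - b i\<bar> \<le> \<epsilon> + \<delta> * K)"
    using f by blast
qed

lemma lip_interpolating_image_balls_cover:
  fixes x y :: "'i \<Rightarrow> 'a::metric_space"
  assumes interp: "lip_interpolating p x y"
  shows "(\<Union>n::nat. {(\<lambda>i. mol (x i) (y i) f) | f. lip0 p f \<and> lipnorm f \<le> real n}) =
    {b. bounded (range b)}" (is "(\<Union>n. ?A n) = ?B")
proof (intro equalityI subsetI)
  fix b
  assume "b \<in> (\<Union>n. ?A n)"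
  then obtain n f where "lip0 p f" "lipnorm f \<le> real n" "b = (\<lambda>i. mol (x i) (y i) f)"
    by blast
  then have "\<forall>c\<in>range b. norm c \<le> real n"
    using abs_mol_le_lipnorm[of p f] by (auto intro: order_trans)
  then show "b \<in> ?B"
    unfolding bounded_iff by blast
next
  fix b
  assume "b \<in> ?B"
  then obtain f where f: "lip0 p f" "\<forall>i. mol (x i) (y i) f = b i"
    using interp unfolding lip_interpolating_def by blast
  then have "b = (\<lambda>i. mol (x i) (y i) f)"
    by auto
  then have "b \<in> ?A (nat \<lceil>lipnorm f\<rceil>)"
    using f(1) real_nat_ceiling_ge[of "lipnorm f"] by blast
  then show "b \<in> (\<Union>n. ?A n)"
    by blast
qed

lemma lip_interpolating_imp_interp_approx:
  fixes x y :: "'i \<Rightarrow> 'a::metric_space"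
  assumes interp: "lip_interpolating p x y"
  obtains r K where "r > 0" "K > 0" "interp_approx p x y r K (r / 4)"
proof -
  define A where "A n = {(\<lambda>i. mol (x i) (y i) f) | f. lip0 p f \<and> lipnorm f \<le> real n}" for n :: nat
  have "(\<Union>n. A n) = {b. bounded (range b)}"
    unfolding A_def by (rule lip_interpolating_image_balls_cover[OF interp])
  then obtain r b0 n where "r > 0"
    and dense: "\<And>b e. \<forall>i. \<bar>b i - b0 i\<bar> \<le> r \<Longrightarrow> e > 0 \<Longrightarrow> \<exists>c\<in>A n. \<forall>i. \<bar>b i - c i\<bar> \<le> e"
    by (rule bounded_funs_Baire) blast
  have approx: "\<exists>f. lip0 p f \<and> lipnorm f \<le> real n \<and> (\<forall>i. \<bar>mol (x i) (y i) f - b i\<bar> \<le> r / 8)"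
    if "\<forall>i. \<bar>b i - b0 i\<bar> \<le> r" for b
    using dense[OF that, of "r / 8"] \<open>r > 0\<close> unfolding A_def by (force simp: abs_minus_commute)
  \<comment> \<open>Recentre at the origin via b = (b0 + b) - b0, at the price of doubling the norm bound.\<close>
  have "interp_approx p x y r (2 * real n + 1) (r / 4)"
    unfolding interp_approx_def
  proof (intro allI impI)
    fix b :: "'i \<Rightarrow> real"
    assume "\<forall>i. \<bar>b i\<bar> \<le> r"
    then obtain f1 where f1: "lip0 p f1" "lipnorm f1 \<le> real n"
      and err1: "\<forall>i. \<bar>mol (x i) (y i) f1 - (b0 i + b i)\<bar> \<le> r / 8"
      using approx[of "\<lambda>i. b0 i + b i"] by auto
    obtain f0 where f0: "lip0 p f0" "lipnorm f0 \<le> real n"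
      and err0: "\<forall>i. \<bar>mol (x i) (y i) f0 - b0 i\<bar> \<le> r / 8"
      using approx[of b0] \<open>r > 0\<close> by auto
    have "lip0 p (\<lambda>z. f1 z - f0 z)" "lipnorm (\<lambda>z. f1 z - f0 z) \<le> 2 * real n + 1"
      using lip0_diff[OF f1(1) f0(1)] f1(2) f0(2) by auto
    moreover have "\<bar>mol (x i) (y i) (\<lambda>z. f1 z - f0 z) - b i\<bar> \<le> r / 4" for i
      using err1[rule_format, of i] err0[rule_format, of i] unfolding mol_diff by linarith
    ultimately show "\<exists>f. lip0 p f \<and> lipnorm f \<le> 2 * real n + 1 \<and>
        (\<forall>i. \<bar>mol (x i) (y i) f - b i\<bar> \<le> r / 4)"
      by blast
  qed
  moreover have "2 * real n + 1 > 0"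
    by simp
  ultimately show thesis
    using that \<open>r > 0\<close> by blast
qed

lemma interp_approx_series:
  fixes u v :: "'i \<Rightarrow> 'a::metric_space"
  assumes "B > 0"
    and approx: "\<And>k. interp_approx p u v (B / 2 ^ k) (C * B / 2 ^ k) (B / 2 ^ Suc k)"
    and a: "\<forall>i. \<bar>a i\<bar> \<le> B"
  obtains f where "\<And>k. lip0 p (f k)" "\<And>k. lipnorm (f k) \<le> C * B / 2 ^ k"
    "\<And>i. (\<lambda>k. mol (u i) (v i) (f k)) sums a i"
proof -
  obtain F where F: "\<And>k b. \<forall>i. \<bar>b i\<bar> \<le> B / 2 ^ k \<Longrightarrow>
      lip0 p (F k b) \<and> lipnorm (F k b) \<le> C * B / 2 ^ k \<and>
      (\<forall>i. \<bar>mol (u i) (v i) (F k b) - b i\<bar> \<le> B / 2 ^ Suc k)"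
    using approx unfolding interp_approx_def by metis
  define residual where "residual = rec_nat a (\<lambda>k b i. b i - mol (u i) (v i) (F k b))"
  have residual_Suc: "residual (Suc k) i = residual k i - mol (u i) (v i) (F k (residual k))" for k i
    unfolding residual_def by simp
  have residual_bound: "\<forall>i. \<bar>residual k i\<bar> \<le> B / 2 ^ k" for k
  proof (induction k)
    case 0
    then show ?case
      using a unfolding residual_def by simp
  next
    case (Suc k)
    then show ?case
      using F[OF Suc] unfolding residual_Suc by (simp add: abs_minus_commute)
  qed
  have mol_correction: "mol (u i) (v i) (F k (residual k)) = residual k i - residual (Suc k) i" for k i
    unfolding residual_Suc by simp
  show thesis
  proof (rule that[of "\<lambda>k. F k (residual k)"])
    fix k
    show "lip0 p (F k (residual k))" "lipnorm (F k (residual k)) \<le> C * B / 2 ^ k"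
      using F[OF residual_bound] by auto
  next
    fix i
    have "(\<lambda>n. B / 2 ^ n) \<longlonglongrightarrow> 0"
      by (rule LIMSEQ_divide_realpow_zero) simp
    then have "(\<lambda>n. residual n i) \<longlonglongrightarrow> 0"
      by (rule Lim_null_comparison[rotated]) (simp add: residual_bound)
    then have "(\<lambda>n. residual 0 i - residual n i) \<longlonglongrightarrow> residual 0 i - 0"
      by (intro tendsto_diff tendsto_const)
    then show "(\<lambda>k. mol (u i) (v i) (F k (residual k))) sums a i"
      unfolding sums_def mol_correction sum_lessThan_telescope'[of "\<lambda>k. residual k i"]
      by (simp add: residual_def)
  qed
qed

lemma lip_interpolating_if_interp_approx:
  fixes u v :: "'i \<Rightarrow> 'a::metric_space"
  assumes "r > 0" and approx: "interp_approx p u v r K (r / 2)"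
  shows "lip_interpolating p u v"
  unfolding lip_interpolating_def
proof (intro allI impI)
  fix a :: "'i \<Rightarrow> real"
  assume "bounded (range a)"
  then obtain B where "B > 0" and a: "\<forall>i. \<bar>a i\<bar> \<le> B"
    unfolding bounded_pos by auto
  have "interp_approx p u v (B / 2 ^ k) (K / r * B / 2 ^ k) (B / 2 ^ Suc k)" for k
  proof -
    define c where "c = B / 2 ^ k / r"
    have "c > 0"
      using \<open>B > 0\<close> \<open>r > 0\<close> unfolding c_def by simp
    moreover have "c * r = B / 2 ^ k" "c * K = K / r * B / 2 ^ k" "c * (r / 2) = B / 2 ^ Suc k"
      using \<open>r > 0\<close> unfolding c_def by (simp_all add: field_simps)
    ultimately show ?thesis
      using interp_approx_scale[OF approx, of c] by metis
  qed
  then obtain f where f: "\<And>k. lip0 p (f k)" "\<And>k. lipnorm (f k) \<le> K / r * B / 2 ^ k"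
    and sums: "\<And>i. (\<lambda>k. mol (u i) (v i) (f k)) sums a i"
    using interp_approx_series[OF \<open>B > 0\<close> _ a] by metis
  have "summable (\<lambda>k. K / r * B / 2 ^ k)"
    using summable_mult[OF summable_geometric[of "1 / 2"], of "K / r * B"] by (simp add: power_one_over)
  note series = lip0_suminf[OF f this]
  have "mol (u i) (v i) (\<lambda>z. \<Sum>k. f k z) = a i" for i
    using sums_unique2[OF series(2) sums] .
  then show "\<exists>f. lip0 p f \<and> (\<forall>i. mol (u i) (v i) f = a i)"
    using series(1) by blast
qed

theorem proposition3p21:
  fixes p :: "'a::metric_space" and x y :: "'i \<Rightarrow> 'a"
  assumes "\<forall>i. x i \<noteq> y i"
    and "lip_interpolating p x y"
  shows "\<exists>\<delta>>0. \<forall>u v :: 'i \<Rightarrow> 'a.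
           (\<forall>i. u i \<noteq> v i) \<and> (\<forall>i. mol_dist p (x i, y i) (u i, v i) < \<delta>)
           \<longrightarrow> lip_interpolating p u v"
proof -
  obtain r K where "r > 0" "K > 0" and approx: "interp_approx p x y r K (r / 4)"
    by (rule lip_interpolating_imp_interp_approx[OF assms(2)])
  show ?thesis
  proof (intro exI[of _ "r / (4 * K)"] conjI allI impI)
    show "r / (4 * K) > 0"
      using \<open>r > 0\<close> \<open>K > 0\<close> by simp
    fix u v :: "'i \<Rightarrow> 'a"
    assume "(\<forall>i. u i \<noteq> v i) \<and> (\<forall>i. mol_dist p (x i, y i) (u i, v i) < r / (4 * K))"
    then have "interp_approx p u v r K (r / 4 + r / (4 * K) * K)"
      using \<open>r > 0\<close> \<open>K > 0\<close> by (intro interp_approx_perturb[OF approx]) (auto intro: less_imp_le)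
    then have "interp_approx p u v r K (r / 2)"
      using \<open>K > 0\<close> by simp
    then show "lip_interpolating p u v"
      by (rule lip_interpolating_if_interp_approx[OF \<open>r > 0\<close>])
  qed
qed

end
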